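(* For each $(\varepsilon,\delta)\in(0,1)\times(0,\delta_0]$, $$\mathcal R^\ast(\varepsilon,\delta|p_{X_1X_2},p_{K_1K_2})\subseteq\mathcal R_{\rm sw}(p_{X_1X_2}).$$
   Context: All logarithms are base 2. $\mathcal X_1,\mathcal X_2$ are finite fields. $(X_1,X_2)$ has joint pmf $p_{X_1X_2}$ on $\mathcal X_1\times\mathcal X_2$ and $(K_1,K_2)$ has joint pmf $p_{K_1K_2}$ on $\mathcal X_1\times\mathcal X_2$. For block length $n$, $(\mathbf X_1,\mathbf X_2)$ is i.i.d. with law $p^n_{X_1X_2}$ (source), $(\mathbf K_1,\mathbf K_2)$ is i.i.d. with law $p^n_{K_1K_2}$ (keys), and the keys are independent of the sources. A distributed source encryption system at block length $n$ consists of finite sets $\mathcal C_i^{(n)}$, encryption maps $\Phi_i^{(n)}:\mathcal X_i^n\times\mathcal X_i^n\to\mathcal C_i^{(n)}$ (key, plaintext) and a decryption map $\Psi^{(n)}:\mathcal X_1^n\times\mathcal X_2^n\times\mathcal C_1^{(n)}\times\mathcal C_2^{(n)}\to\mathcal X_1^n\times\mathcal X_2^n$, such that there exist maps $\phi_i^{(n)}:\mathcal X_i^n\to\mathcal M_i^{(n)}$ (finite $\mathcal M_i^{(n)}$) and $\psi^{(n)}$ with $\Psi^{(n)}(\mathbf k_1,\mathbf k_2,\Phi_1^{(n)}(\mathbf k_1,\mathbf x_1),\Phi_2^{(n)}(\mathbf k_2,\mathbf x_2))=\psi^{(n)}(\phi_1^{(n)}(\mathbf x_1),\phi_2^{(n)}(\mathbf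 x_2))$ for all keys and plaintexts. Ciphertexts: $C_i^{(n)}=\Phi_i^{(n)}(\mathbf K_i,\mathbf X_i)$. Correct decoding set $\mathcal D^{(n)}:=\{(\mathbf x_1,\mathbf x_2):\psi^{(n)}(\phi_1^{(n)}(\mathbf x_1),\phi_2^{(n)}(\mathbf x_2))=(\mathbf x_1,\mathbf x_2)\}$; error probability $p_{\rm e}:=\Pr[(\mathbf X_1,\mathbf X_2)\notin\mathcal D^{(n)}]$. Fix a constant $\delta_0>0$. For $(\varepsilon,\delta)\in(0,1)\times[0,\delta_0]$, $(R_1,R_2)$ is an $(\varepsilon,\delta)$-reliable and secure rate pair if there is a sequence of systems $\{(\Phi_1^{(n)},\Phi_2^{(n)},\Psi^{(n)})\}_{n\ge1}$ such that for every $\gamma>0$ there is $n_0$ with, for all $n\ge n_0$: $\frac1n\log|\mathcal C_i^{(n)}|\le R_i+\gamma$ ($i=1,2$), $p_{\rm e}\le\varepsilon$, and $I(C_1^{(n)}C_2^{(n)};\mathbf X_1\mathbf X_2)\le\delta$. $\mathcal R^\ast(\varepsilon,\delta|p_{X_1X_2},p_{K_1K_2})$ is the set of such pairs. $\mathcal R_{\rm sw}(p_{X_1X_2}):=\{(R_1,R_2):R_1\ge H(X_1|X_2),R_2\ge H(X_2|X_1),R_1+R_2\ge H(X_1X_2)\}$. *)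

theory Defs
  imports "HOL-Probability.Probability"
begin

definition entropy2 :: "'a pmf \<Rightarrow> real" where
  "entropy2 q = - (\<Sum>z\<in>set_pmf q. pmf q z * log 2 (pmf q z))"

definition mutual_info2 :: "('a \<times> 'b) pmf \<Rightarrow> real" where
  "mutual_info2 q = (\<Sum>z\<in>set_pmf q. pmf q z *
      log 2 (pmf q z / (pmf (map_pmf fst q) (fst z) * pmf (map_pmf snd q) (snd z))))"

definition iid_block :: "nat \<Rightarrow> ('a \<times> 'b) pmf \<Rightarrow> ('a list \<times> 'b list) pmf" where
  "iid_block n p = map_pmf (\<lambda>zs. (map fst zs, map snd zs)) (replicate_pmf n p)"

text \<open>Valid distributed source encryption system at block length n
  (finite sets are represented as finite subsets of nat).
  Phi_i takes (key, plaintext); Psi takes (k1, k2, c1, c2).\<close>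
definition is_dse_system ::
  "nat \<Rightarrow> nat set \<Rightarrow> nat set
   \<Rightarrow> ('a list \<Rightarrow> 'a list \<Rightarrow> nat) \<Rightarrow> ('b list \<Rightarrow> 'b list \<Rightarrow> nat)
   \<Rightarrow> ('a list \<Rightarrow> 'b list \<Rightarrow> nat \<Rightarrow> nat \<Rightarrow> 'a list \<times> 'b list)
   \<Rightarrow> nat set \<Rightarrow> nat set \<Rightarrow> ('a list \<Rightarrow> nat) \<Rightarrow> ('b list \<Rightarrow> nat)
   \<Rightarrow> (nat \<Rightarrow> nat \<Rightarrow> 'a list \<times> 'b list) \<Rightarrow> bool" where
  "is_dse_system n C1 C2 Phi1 Phi2 Psi M1 M2 phi1 phi2 psi \<longleftrightarrow>
     finite C1 \<and> finite C2 \<and> finite M1 \<and> finite M2 \<and>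
     (\<forall>k x. length k = n \<longrightarrow> length x = n \<longrightarrow> Phi1 k x \<in> C1) \<and>
     (\<forall>k x. length k = n \<longrightarrow> length x = n \<longrightarrow> Phi2 k x \<in> C2) \<and>
     (\<forall>x. length x = n \<longrightarrow> phi1 x \<in> M1) \<and>
     (\<forall>x. length x = n \<longrightarrow> phi2 x \<in> M2) \<and>
     (\<forall>k1 k2 x1 x2. length k1 = n \<longrightarrow> length k2 = n \<longrightarrow> length x1 = n \<longrightarrow> length x2 = n \<longrightarrow>
        Psi k1 k2 (Phi1 k1 x1) (Phi2 k2 x2) = psi (phi1 x1) (phi2 x2))"

definition cipher_source_joint ::
  "nat \<Rightarrow> ('a \<times> 'b) pmf \<Rightarrow> ('a \<times> 'b) pmf
   \<Rightarrow> ('a list \<Rightarrow> 'a list \<Rightarrow> nat) \<Rightarrow> ('b list \<Rightarrow> 'b list \<Rightarrow> nat)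
   \<Rightarrow> ((nat \<times> nat) \<times> ('a list \<times> 'b list)) pmf" where
  "cipher_source_joint n pX pK Phi1 Phi2 =
     do { x \<leftarrow> iid_block n pX; k \<leftarrow> iid_block n pK;
          return_pmf ((Phi1 (fst k) (fst x), Phi2 (snd k) (snd x)), x) }"

definition error_prob ::
  "nat \<Rightarrow> ('a \<times> 'b) pmf \<Rightarrow> ('a list \<Rightarrow> nat) \<Rightarrow> ('b list \<Rightarrow> nat)
   \<Rightarrow> (nat \<Rightarrow> nat \<Rightarrow> 'a list \<times> 'b list) \<Rightarrow> real" where
  "error_prob n pX phi1 phi2 psi =
     measure_pmf.prob (iid_block n pX) {x. psi (phi1 (fst x)) (phi2 (snd x)) \<noteq> x}"

definition reliable_secure_region ::
  "real \<Rightarrow> real \<Rightarrow> ('a::{finite,field} \<times> 'b::{finite,field}) pmf \<Rightarrow> ('a \<times> 'b) pmf \<Rightarrow> (real \<times> real) set" where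
  "reliable_secure_region eps delta pX pK = {(R1, R2).
     \<exists>(C1 :: nat \<Rightarrow> nat set) (C2 :: nat \<Rightarrow> nat set)
      (Phi1 :: nat \<Rightarrow> 'a list \<Rightarrow> 'a list \<Rightarrow> nat) (Phi2 :: nat \<Rightarrow> 'b list \<Rightarrow> 'b list \<Rightarrow> nat)
      (Psi :: nat \<Rightarrow> 'a list \<Rightarrow> 'b list \<Rightarrow> nat \<Rightarrow> nat \<Rightarrow> 'a list \<times> 'b list)
      (M1 :: nat \<Rightarrow> nat set) (M2 :: nat \<Rightarrow> nat set)
      (phi1 :: nat \<Rightarrow> 'a list \<Rightarrow> nat) (phi2 :: nat \<Rightarrow> 'b list \<Rightarrow> nat)
      (psi :: nat \<Rightarrow> nat \<Rightarrow> nat \<Rightarrow> 'a list \<times> 'b list).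
       (\<forall>n. is_dse_system n (C1 n) (C2 n) (Phi1 n) (Phi2 n) (Psi n) (M1 n) (M2 n)
                (phi1 n) (phi2 n) (psi n)) \<and>
       (\<forall>\<gamma>>0. \<exists>n0. \<forall>n\<ge>n0.
          log 2 (real (card (C1 n))) / real n \<le> R1 + \<gamma> \<and>
          log 2 (real (card (C2 n))) / real n \<le> R2 + \<gamma> \<and>
          error_prob n pX (phi1 n) (phi2 n) (psi n) \<le> eps \<and>
          mutual_info2 (cipher_source_joint n pX pK (Phi1 n) (Phi2 n)) \<le> delta)}"

text \<open>Slepian--Wolf region.  H(X1|X2) = H(X1X2) - H(X2), H(X2|X1) = H(X1X2) - H(X1).\<close>
definition sw_region :: "('a \<times> 'b) pmf \<Rightarrow> (real \<times> real) set" where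
  "sw_region p = {(R1, R2).
     R1 \<ge> entropy2 p - entropy2 (map_pmf snd p) \<and>
     R2 \<ge> entropy2 p - entropy2 (map_pmf fst p) \<and>
     R1 + R2 \<ge> entropy2 p}"

end

theory Submission
  imports Defs
begin

(* Fix any key. The decoder recovers each correctly decoded block from the two ciphertexts,
   so encryption under that key is injective on the correct-decoding set D. Hence
   |D| <= |C1| |C2|, and each fibre of D over an X2-block has at most |C1| elements, so the
   sum over D of p_X2^n(x2) is at most |C1|; symmetrically for X1.
   For a weight g and G(D) = sum over D of prod_i g(z_i), the Chernoff-type bound
     P^n(D) <= t G(D) + t^(1-a) (sum_z P(z)^a g(z)^(1-a))^n        (t > 0, a > 1)
   with a close to 1 shows that P^n(D) -> 0 whenever G(D) <= 2^(nR) with R < -D(P||g).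
   Taking g = 1, g = p_X2 and g = p_X1 gives the bounds H(X1X2), H(X1|X2) and H(X2|X1),
   since otherwise P^n(D) >= 1 - eps > 0 fails. *)

lemma pmf_replicate_pmf:
  "pmf (replicate_pmf n p) xs = (if length xs = n then (\<Prod>x\<leftarrow>xs. pmf p x) else 0)"
proof (induction n arbitrary: xs)
  case 0
  then show ?case by (cases xs) (auto simp: pmf_return)
next
  case (Suc n)
  show ?case
  proof (cases xs)
    case Nil
    have "[] \<notin> set_pmf (replicate_pmf (Suc n) p)"
      unfolding set_replicate_pmf by simp
    then show ?thesis using Nil by (simp only: set_pmf_iff) simp
  next
    case (Cons y ys)
    have "replicate_pmf (Suc n) p = map_pmf (\<lambda>(x, xs). x # xs) (pair_pmf p (replicate_pmf n p))"
      by (simp add: pair_pmf_def map_pmf_def bind_assoc_pmf bind_return_pmf)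
    moreover have "inj (\<lambda>(x :: 'a, xs). x # xs)" by (auto simp: inj_def)
    ultimately have "pmf (replicate_pmf (Suc n) p) xs = pmf (pair_pmf p (replicate_pmf n p)) (y, ys)"
      using pmf_map_inj' Cons by (metis case_prod_conv)
    then show ?thesis using Suc.IH[of ys] Cons by (simp add: pmf_pair)
  qed
qed

lemma finite_lists_length: "finite {xs :: 'a::finite list. length xs = n}"
  using finite_lists_length_eq[of "UNIV :: 'a set" n] by simp

lemma sum_prod_list_lists_length:
  fixes h :: "'a::finite \<Rightarrow> 'b::comm_semiring_1"
  shows "(\<Sum>xs | length xs = n. \<Prod>x\<leftarrow>xs. h x) = (\<Sum>x\<in>UNIV. h x) ^ n"
proof (induction n)
  case 0
  then show ?case by simp
next
  case (Suc n)
  have lists: "{xs :: 'a list. length xs = Suc n} = (\<lambda>(x, xs). x # xs) ` (UNIV \<times> {xs. length xs = n})"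
    by (auto simp: length_Suc_conv image_iff)
  have "inj_on (\<lambda>(x :: 'a, xs). x # xs) (UNIV \<times> {xs. length xs = n})"
    by (auto simp: inj_on_def)
  then have "(\<Sum>xs | length xs = Suc n. \<Prod>x\<leftarrow>xs. h x)
      = (\<Sum>(x, xs)\<in>UNIV \<times> {xs. length xs = n}. h x * (\<Prod>x\<leftarrow>xs. h x))"
    unfolding lists by (subst sum.reindex) (simp_all add: case_prod_unfold)
  also have "\<dots> = (\<Sum>x\<in>UNIV. h x) * (\<Sum>xs | length xs = n. \<Prod>x\<leftarrow>xs. h x)"
    by (simp add: sum_product sum.cartesian_product)
  finally show ?case using Suc.IH by simp
qed

lemma sum_prod_pmf_lists_length:
  fixes q :: "'a::finite pmf"
  shows "(\<Sum>xs | length xs = n. \<Prod>x\<leftarrow>xs. pmf q x) = 1"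
  by (simp add: sum_prod_list_lists_length sum_pmf_eq_1)

lemma prod_list_map_mult:
  "(\<Prod>x\<leftarrow>xs. f x) * (\<Prod>x\<leftarrow>xs. g x) = (\<Prod>x\<leftarrow>xs. f x * g x :: 'a::comm_monoid_mult)"
  by (induction xs) (auto simp: algebra_simps)

lemma prod_list_map_powr:
  "\<forall>x\<in>set xs. 0 \<le> (f x :: real) \<Longrightarrow> (\<Prod>x\<leftarrow>xs. f x) powr a = (\<Prod>x\<leftarrow>xs. f x powr a)"
  by (induction xs) (auto simp: powr_mult prod_list_nonneg)

definition rel_entropy2 :: "'a pmf \<Rightarrow> ('a \<Rightarrow> real) \<Rightarrow> real" where
  "rel_entropy2 p g = (\<Sum>z\<in>set_pmf p. pmf p z * log 2 (pmf p z / g z))"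

lemma rel_entropy2_const_one: "rel_entropy2 p (\<lambda>_. 1) = - entropy2 p"
  by (simp add: rel_entropy2_def entropy2_def)

lemma sum_pmf_mult_log_comp:
  fixes p :: "'z::finite pmf"
  shows "(\<Sum>z\<in>set_pmf p. pmf p z * log 2 (pmf (map_pmf f p) (f z))) = - entropy2 (map_pmf f p)"
proof -
  let ?h = "\<lambda>y. log 2 (pmf (map_pmf f p) y)"
  have "(\<Sum>z\<in>set_pmf p. pmf p z * ?h (f z)) = (\<integral>z. ?h (f z) \<partial>measure_pmf p)"
    by (subst integral_measure_pmf_real[of "set_pmf p"]) (auto simp: mult.commute)
  also have "\<dots> = (\<integral>y. ?h y \<partial>measure_pmf (map_pmf f p))" by simp
  also have "\<dots> = (\<Sum>y\<in>set_pmf (map_pmf f p). pmf (map_pmf f p) y * ?h y)"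
    by (subst integral_measure_pmf_real[of "set_pmf (map_pmf f p)"]) (auto simp: mult.commute)
  finally show ?thesis by (simp add: entropy2_def)
qed

lemma rel_entropy2_marginal:
  fixes p :: "'z::finite pmf"
  shows "rel_entropy2 p (\<lambda>z. pmf (map_pmf f p) (f z)) = entropy2 (map_pmf f p) - entropy2 p"
proof -
  have "rel_entropy2 p (\<lambda>z. pmf (map_pmf f p) (f z))
      = (\<Sum>z\<in>set_pmf p. pmf p z * log 2 (pmf p z) - pmf p z * log 2 (pmf (map_pmf f p) (f z)))"
    unfolding rel_entropy2_def
  proof (intro sum.cong refl)
    fix z assume "z \<in> set_pmf p"
    then have "0 < pmf p z" "0 < pmf (map_pmf f p) (f z)" by (simp_all add: pmf_positive)
    then show "pmf p z * log 2 (pmf p z / pmf (map_pmf f p) (f z))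
        = pmf p z * log 2 (pmf p z) - pmf p z * log 2 (pmf (map_pmf f p) (f z))"
      by (simp add: log_divide right_diff_distrib)
  qed
  then show ?thesis by (simp add: sum_subtractf sum_pmf_mult_log_comp entropy2_def)
qed

lemma exists_renyi_order:
  fixes p :: "'z::finite pmf"
  assumes g_pos: "\<And>z. z \<in> set_pmf p \<Longrightarrow> 0 < g z" and neg: "rel_entropy2 p g + c < 0"
  shows "\<exists>a>1. (\<Sum>z\<in>UNIV. pmf p z powr a * g z powr (1 - a)) * 2 powr ((a - 1) * c) < 1"
proof -
  define S where "S = set_pmf p"
  define e where "e z = (log 2 (pmf p z / g z) + c) * ln 2" for z
  \<comment> \<open>F a is the left-hand side at order a; F 1 = 1 and F'(1) < 0.\<close>
  define F where "F a = (\<Sum>z\<in>S. pmf p z * exp ((a - 1) * e z))" for a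
  have pmf_pos: "0 < pmf p z" if "z \<in> S" for z using that by (simp add: S_def pmf_positive)
  have "(\<Sum>z\<in>S. pmf p z * e z)
      = (\<Sum>z\<in>S. pmf p z * log 2 (pmf p z / g z)) * ln 2 + (\<Sum>z\<in>S. pmf p z) * (c * ln 2)"
    by (simp add: e_def distrib_left distrib_right sum.distrib sum_distrib_right mult.assoc)
  also have "\<dots> = (rel_entropy2 p g + c) * ln 2"
    by (simp add: S_def rel_entropy2_def sum_pmf_eq_1 algebra_simps)
  finally have "(F has_real_derivative (rel_entropy2 p g + c) * ln 2) (at 1)"
    unfolding F_def by (auto intro!: derivative_eq_intros simp: mult.commute)
  moreover have "(rel_entropy2 p g + c) * ln 2 < 0"
    using neg by (simp add: mult_neg_pos)
  ultimately obtain d where "0 < d" and dec: "\<And>h. 0 < h \<Longrightarrow> h < d \<Longrightarrow> F (1 + h) < F 1"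
    by (metis DERIV_neg_dec_right)
  define a where "a = 1 + d / 2"
  have "1 < a" and "F a < 1"
    using dec[of "d / 2"] \<open>0 < d\<close> by (simp_all add: a_def F_def S_def sum_pmf_eq_1)
  have "(\<Sum>z\<in>UNIV. pmf p z powr a * g z powr (1 - a)) * 2 powr ((a - 1) * c)
      = (\<Sum>z\<in>S. pmf p z powr a * g z powr (1 - a) * 2 powr ((a - 1) * c))"
    by (subst sum.mono_neutral_right[of UNIV S]) (auto simp: S_def set_pmf_iff sum_distrib_right)
  also have "\<dots> = F a"
    unfolding F_def
  proof (intro sum.cong refl)
    fix z assume "z \<in> S"
    then have "0 < pmf p z" "0 < g z" using pmf_pos g_pos by (auto simp: S_def)
    then have e_eq: "e z = ln (pmf p z) - ln (g z) + c * ln 2"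
      by (simp add: e_def log_def ln_div field_simps)
    have "pmf p z powr a * g z powr (1 - a) * 2 powr ((a - 1) * c)
        = exp (ln (pmf p z) + (a - 1) * (ln (pmf p z) - ln (g z) + c * ln 2))"
      using \<open>0 < pmf p z\<close> \<open>0 < g z\<close> by (simp add: powr_def exp_add[symmetric] algebra_simps)
    then have "pmf p z powr a * g z powr (1 - a) * 2 powr ((a - 1) * c) = exp (ln (pmf p z) + (a - 1) * e z)"
      unfolding e_eq .
    then show "pmf p z powr a * g z powr (1 - a) * 2 powr ((a - 1) * c) = pmf p z * exp ((a - 1) * e z)"
      using \<open>0 < pmf p z\<close> by (simp add: exp_add)
  qed
  finally show ?thesis using \<open>1 < a\<close> \<open>F a < 1\<close> by auto
qed

lemma le_mult_add_powr_mult_powr: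
  fixes P Q t a :: real
  assumes "0 \<le> P" "0 \<le> Q" "0 < P \<Longrightarrow> 0 < Q" "0 < t" "1 < a"
  shows "P \<le> t * Q + t powr (1 - a) * (P powr a * Q powr (1 - a))"
proof (cases "P \<le> t * Q")
  case True
  then show ?thesis using assms by (simp add: add_increasing2)
next
  case False
  then have "0 < P" using mult_nonneg_nonneg[of t Q] assms by linarith
  then have "0 < Q" using assms(3) by blast
  have "1 \<le> P / (t * Q)" using False \<open>0 < Q\<close> assms(4) by simp
  then have "1 \<le> (P / (t * Q)) powr (a - 1)" using assms(5) by (simp add: ge_one_powr_ge_zero)
  then have "P \<le> P * (P / (t * Q)) powr (a - 1)" using \<open>0 < P\<close> by simp
  also have "\<dots> = t powr (1 - a) * (P powr a * Q powr (1 - a))"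
    using \<open>0 < P\<close> \<open>0 < Q\<close> assms(4)
    by (simp add: powr_divide powr_mult powr_diff powr_add[symmetric] powr_minus_divide field_simps)
  finally show ?thesis using mult_nonneg_nonneg[of t Q] assms(2,4) by linarith
qed

lemma prob_replicate_pmf_le_renyi:
  fixes p :: "'z::finite pmf" and g :: "'z \<Rightarrow> real"
  assumes g_nonneg: "\<And>z. 0 \<le> g z" and g_pos: "\<And>z. z \<in> set_pmf p \<Longrightarrow> 0 < g z"
    and "0 < t" "1 < a" and D: "D \<subseteq> {xs. length xs = n}"
  shows "measure_pmf.prob (replicate_pmf n p) D
     \<le> t * (\<Sum>xs\<in>D. \<Prod>x\<leftarrow>xs. g x)
       + t powr (1 - a) * (\<Sum>z\<in>UNIV. pmf p z powr a * g z powr (1 - a)) ^ n"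
proof -
  define h where "h z = pmf p z powr a * g z powr (1 - a)" for z
  have "finite D" using D finite_lists_length finite_subset by blast
  have pointwise: "pmf (replicate_pmf n p) xs \<le> t * (\<Prod>x\<leftarrow>xs. g x) + t powr (1 - a) * (\<Prod>x\<leftarrow>xs. h x)"
    if "xs \<in> D" for xs
  proof -
    have "0 < (\<Prod>x\<leftarrow>xs. g x)" if "0 < (\<Prod>x\<leftarrow>xs. pmf p x)"
    proof -
      have "0 \<notin> set (map (pmf p) xs)"
        using that by (metis less_irrefl prod_list_zero_iff)
      then have "\<forall>x\<in>set xs. 0 < g x"
        using g_pos by (force simp: set_pmf_iff)
      then show ?thesis by (induction xs) auto
    qed
    then have "(\<Prod>x\<leftarrow>xs. pmf p x) \<le> t * (\<Prod>x\<leftarrow>xs. g x)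
        + t powr (1 - a) * ((\<Prod>x\<leftarrow>xs. pmf p x) powr a * (\<Prod>x\<leftarrow>xs. g x) powr (1 - a))"
      using \<open>0 < t\<close> \<open>1 < a\<close> g_nonneg
      by (intro le_mult_add_powr_mult_powr) (auto intro!: prod_list_nonneg)
    also have "(\<Prod>x\<leftarrow>xs. pmf p x) powr a * (\<Prod>x\<leftarrow>xs. g x) powr (1 - a) = (\<Prod>x\<leftarrow>xs. h x)"
      by (simp add: prod_list_map_powr g_nonneg h_def prod_list_map_mult)
    finally show ?thesis
      using that D by (auto simp: pmf_replicate_pmf)
  qed
  have "measure_pmf.prob (replicate_pmf n p) D = (\<Sum>xs\<in>D. pmf (replicate_pmf n p) xs)"
    by (rule measure_measure_pmf_finite[OF \<open>finite D\<close>])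
  also have "\<dots> \<le> (\<Sum>xs\<in>D. t * (\<Prod>x\<leftarrow>xs. g x) + t powr (1 - a) * (\<Prod>x\<leftarrow>xs. h x))"
    by (rule sum_mono) (rule pointwise)
  also have "\<dots> = t * (\<Sum>xs\<in>D. \<Prod>x\<leftarrow>xs. g x) + t powr (1 - a) * (\<Sum>xs\<in>D. \<Prod>x\<leftarrow>xs. h x)"
    by (simp add: sum.distrib sum_distrib_left)
  also have "(\<Sum>xs\<in>D. \<Prod>x\<leftarrow>xs. h x) \<le> (\<Sum>xs | length xs = n. \<Prod>x\<leftarrow>xs. h x)"
    by (rule sum_mono2[OF finite_lists_length D]) (auto simp: h_def intro!: prod_list_nonneg)
  also have "\<dots> = (\<Sum>z\<in>UNIV. h z) ^ n"
    by (rule sum_prod_list_lists_length)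
  finally show ?thesis
    unfolding h_def by (simp add: mult_left_mono)
qed

lemma prob_replicate_pmf_tendsto_zero:
  fixes p :: "'z::finite pmf" and g :: "'z \<Rightarrow> real"
  assumes g_nonneg: "\<And>z. 0 \<le> g z" and g_pos: "\<And>z. z \<in> set_pmf p \<Longrightarrow> 0 < g z"
    and D: "\<And>n. D n \<subseteq> {xs. length xs = n}"
    and small: "eventually (\<lambda>n. (\<Sum>xs\<in>D n. \<Prod>x\<leftarrow>xs. g x) \<le> 2 powr (real n * r)) sequentially"
    and rate: "r < - rel_entropy2 p g"
  shows "(\<lambda>n. measure_pmf.prob (replicate_pmf n p) (D n)) \<longlonglongrightarrow> 0"
proof -
  define c where "c = (r - rel_entropy2 p g) / 2"
  have "r < c" "rel_entropy2 p g + c < 0" using rate by (simp_all add: c_def field_simps)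
  then obtain a where "1 < a"
    and renyi: "(\<Sum>z\<in>UNIV. pmf p z powr a * g z powr (1 - a)) * 2 powr ((a - 1) * c) < 1"
    using exists_renyi_order g_pos by blast
  define f where "f = (\<Sum>z\<in>UNIV. pmf p z powr a * g z powr (1 - a))"
  define \<rho> where "\<rho> = f * 2 powr ((a - 1) * c)"
  define u where "u = 2 powr (r - c)"
  have "0 \<le> \<rho>" "\<rho> < 1" "0 < u" "u < 1"
    using \<open>r < c\<close> renyi powr_less_mono[of "r - c" 0 2] by (simp_all add: \<rho>_def u_def f_def sum_nonneg)
  have upper: "eventually (\<lambda>n. measure_pmf.prob (replicate_pmf n p) (D n) \<le> u ^ n + \<rho> ^ n) sequentially"
    using small
  proof eventually_elim
    case (elim n)
    \<comment> \<open>this threshold makes both terms of the Chernoff bound decay geometrically\<close>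
    define t where "t = 2 powr (- (real n * c))"
    have "measure_pmf.prob (replicate_pmf n p) (D n) \<le> t * (\<Sum>xs\<in>D n. \<Prod>x\<leftarrow>xs. g x) + t powr (1 - a) * f ^ n"
      unfolding f_def t_def using g_nonneg g_pos \<open>1 < a\<close> D
      by (intro prob_replicate_pmf_le_renyi) auto
    also have "\<dots> \<le> t * 2 powr (real n * r) + t powr (1 - a) * f ^ n"
      using elim by (simp add: t_def)
    also have "t * 2 powr (real n * r) = u ^ n"
      by (simp add: t_def u_def powr_add[symmetric] powr_realpow[symmetric] powr_powr algebra_simps)
    also have "t powr (1 - a) * f ^ n = \<rho> ^ n"
    proof -
      have "t powr (1 - a) = (2 powr ((a - 1) * c)) ^ n"
        by (simp add: t_def powr_realpow[symmetric] powr_powr algebra_simps)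
      then show ?thesis by (simp add: \<rho>_def power_mult_distrib mult.commute)
    qed
    finally show ?case .
  qed
  have "(\<lambda>n. u ^ n + \<rho> ^ n) \<longlonglongrightarrow> 0 + 0"
    using \<open>0 \<le> \<rho>\<close> \<open>\<rho> < 1\<close> \<open>0 < u\<close> \<open>u < 1\<close>
    by (intro tendsto_add LIMSEQ_power_zero) auto
  then show ?thesis
    by (intro tendsto_sandwich[OF always_eventually upper tendsto_const]) simp_all
qed

lemma neg_rel_entropy2_le_rate:
  fixes p :: "'z::finite pmf" and g :: "'z \<Rightarrow> real"
  assumes g_nonneg: "\<And>z. 0 \<le> g z" and g_pos: "\<And>z. z \<in> set_pmf p \<Longrightarrow> 0 < g z"
    and D: "\<And>n. D n \<subseteq> {xs. length xs = n}" and "eps < 1"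
    and reliable: "eventually (\<lambda>n. 1 - eps \<le> measure_pmf.prob (replicate_pmf n p) (D n)) sequentially"
    and rates: "\<And>\<gamma>. 0 < \<gamma> \<Longrightarrow>
      eventually (\<lambda>n. (\<Sum>xs\<in>D n. \<Prod>x\<leftarrow>xs. g x) \<le> 2 powr (real n * (R + \<gamma>))) sequentially"
  shows "- rel_entropy2 p g \<le> R"
proof (rule ccontr)
  assume "\<not> - rel_entropy2 p g \<le> R"
  define \<gamma> where "\<gamma> = (- rel_entropy2 p g - R) / 2"
  have "0 < \<gamma>" "R + \<gamma> < - rel_entropy2 p g"
    using \<open>\<not> - rel_entropy2 p g \<le> R\<close> by (simp_all add: \<gamma>_def field_simps)
  then have "(\<lambda>n. measure_pmf.prob (replicate_pmf n p) (D n)) \<longlonglongrightarrow> 0"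
    using prob_replicate_pmf_tendsto_zero[OF g_nonneg g_pos D rates] by blast
  then have "eventually (\<lambda>n. measure_pmf.prob (replicate_pmf n p) (D n) < 1 - eps) sequentially"
    using \<open>eps < 1\<close> by (intro order_tendstoD(2)) auto
  with reliable have "eventually (\<lambda>n. False) sequentially"
    by eventually_elim simp
  then show False by simp
qed

lemma sum_comp_le_card_of_inj_on_pair:
  fixes w :: "'y \<Rightarrow> real"
  assumes "finite S" and inj: "inj_on (\<lambda>x. (e x, f x)) S" and "e ` S \<subseteq> C" "finite C"
    and "f ` S \<subseteq> T" "finite T" and w_nonneg: "\<And>y. y \<in> T \<Longrightarrow> 0 \<le> w y" and "sum w T \<le> 1"
  shows "(\<Sum>x\<in>S. w (f x)) \<le> card C"
proof -
  have fibre: "card {x \<in> S. f x = y} \<le> card C" for y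
  proof (rule card_inj_on_le[OF _ _ \<open>finite C\<close>])
    show "inj_on e {x \<in> S. f x = y}"
      using inj by (auto simp: inj_on_def)
    show "e ` {x \<in> S. f x = y} \<subseteq> C"
      using \<open>e ` S \<subseteq> C\<close> by auto
  qed
  have "(\<Sum>x\<in>S. w (f x)) = (\<Sum>y\<in>f ` S. real (card {x \<in> S. f x = y}) * w y)"
  proof (subst sum.image_gen[OF \<open>finite S\<close>, where g = f], intro sum.cong refl)
    fix y
    have "(\<Sum>x | x \<in> S \<and> f x = y. w (f x)) = (\<Sum>x | x \<in> S \<and> f x = y. w y)"
      by (rule sum.cong) auto
    then show "(\<Sum>x | x \<in> S \<and> f x = y. w (f x)) = real (card {x \<in> S. f x = y}) * w y"
      by simp
  qed
  also have "\<dots> \<le> (\<Sum>y\<in>f ` S. real (card C) * w y)"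
    using fibre w_nonneg \<open>f ` S \<subseteq> T\<close> by (intro sum_mono mult_right_mono) auto
  also have "\<dots> \<le> (\<Sum>y\<in>T. real (card C) * w y)"
    using w_nonneg by (intro sum_mono2 \<open>finite T\<close> \<open>f ` S \<subseteq> T\<close>) simp
  also have "\<dots> \<le> card C"
    using \<open>sum w T \<le> 1\<close> by (simp add: sum_distrib_left[symmetric] mult_left_le)
  finally show ?thesis .
qed

lemma card_le_powr_of_log_div_le:
  assumes "0 < n" "log 2 (real m) / real n \<le> r"
  shows "real m \<le> 2 powr (real n * r)"
proof (cases "m = 0")
  case False
  then have "log 2 (real m) \<le> real n * r" using assms by (simp add: field_simps)
  then have "2 powr log 2 (real m) \<le> 2 powr (real n * r)" by simp
  then show ?thesis using False by simp
qed simp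

(* Source blocks are lists of letter pairs, as drawn by replicate_pmf; iid_block unzips them. *)
definition correct_decoding_set ::
  "nat \<Rightarrow> ('a list \<Rightarrow> nat) \<Rightarrow> ('b list \<Rightarrow> nat) \<Rightarrow> (nat \<Rightarrow> nat \<Rightarrow> 'a list \<times> 'b list)
   \<Rightarrow> ('a \<times> 'b) list set" where
  "correct_decoding_set n phi1 phi2 psi =
     {zs. length zs = n \<and> psi (phi1 (map fst zs)) (phi2 (map snd zs)) = (map fst zs, map snd zs)}"

lemma finite_correct_decoding_set:
  "finite (correct_decoding_set n phi1 phi2 psi :: ('a::finite \<times> 'b::finite) list set)"
  by (rule finite_subset[OF _ finite_lists_length[of n]]) (auto simp: correct_decoding_set_def)

lemma prob_correct_decoding_set:
  "measure_pmf.prob (replicate_pmf n p) (correct_decoding_set n phi1 phi2 psi)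
     = 1 - error_prob n p phi1 phi2 psi"
proof -
  let ?M = "measure_pmf (replicate_pmf n p)"
  let ?E = "{zs. psi (phi1 (map fst zs)) (phi2 (map snd zs)) \<noteq> (map fst zs, map snd zs)}"
  have "measure ?M (correct_decoding_set n phi1 phi2 psi)
      = measure ?M (correct_decoding_set n phi1 phi2 psi \<inter> set_pmf (replicate_pmf n p))"
    by (rule measure_Int_set_pmf[symmetric])
  also have "correct_decoding_set n phi1 phi2 psi \<inter> set_pmf (replicate_pmf n p)
      = (UNIV - ?E) \<inter> set_pmf (replicate_pmf n p)"
    by (auto simp: correct_decoding_set_def set_replicate_pmf)
  also have "measure ?M \<dots> = measure ?M (UNIV - ?E)"
    by (rule measure_Int_set_pmf)
  also have "\<dots> = 1 - measure ?M ?E"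
    using measure_pmf.prob_compl[of ?E "replicate_pmf n p"] by simp
  also have "measure ?M ?E = error_prob n p phi1 phi2 psi"
    by (simp add: error_prob_def iid_block_def vimage_def)
  finally show ?thesis .
qed

lemma inj_on_encrypt_correct_decoding_set:
  assumes sys: "is_dse_system n C1 C2 Phi1 Phi2 Psi M1 M2 phi1 phi2 psi"
    and "length k1 = n" "length k2 = n"
  shows "inj_on (\<lambda>zs. (Phi1 k1 (map fst zs), Phi2 k2 (map snd zs))) (correct_decoding_set n phi1 phi2 psi)"
proof (rule inj_onI)
  fix zs zs' assume zs: "zs \<in> correct_decoding_set n phi1 phi2 psi"
    and zs': "zs' \<in> correct_decoding_set n phi1 phi2 psi"
    and same: "(Phi1 k1 (map fst zs), Phi2 k2 (map snd zs)) = (Phi1 k1 (map fst zs'), Phi2 k2 (map snd zs'))"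
  have dec: "Psi k1 k2 (Phi1 k1 x1) (Phi2 k2 x2) = psi (phi1 x1) (phi2 x2)"
    if "length x1 = n" "length x2 = n" for x1 x2
    using sys that \<open>length k1 = n\<close> \<open>length k2 = n\<close> unfolding is_dse_system_def by blast
  have decrypt: "Psi k1 k2 (Phi1 k1 (map fst ys)) (Phi2 k2 (map snd ys)) = (map fst ys, map snd ys)"
    if "ys \<in> correct_decoding_set n phi1 phi2 psi" for ys
    using that dec[of "map fst ys" "map snd ys"] by (simp add: correct_decoding_set_def)
  have "(map fst zs, map snd zs) = Psi k1 k2 (Phi1 k1 (map fst zs)) (Phi2 k2 (map snd zs))"
    by (rule decrypt[OF zs, symmetric])
  also have "\<dots> = Psi k1 k2 (Phi1 k1 (map fst zs')) (Phi2 k2 (map snd zs'))"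
    using same by simp
  also have "\<dots> = (map fst zs', map snd zs')"
    by (rule decrypt[OF zs'])
  finally show "zs = zs'"
    by (metis prod.inject zip_map_fst_snd)
qed

lemma sum_prod_pmf_snd_correct_decoding_set_le_card:
  fixes phi1 :: "'a::finite list \<Rightarrow> nat" and phi2 :: "'b::finite list \<Rightarrow> nat" and q :: "'b pmf"
  assumes sys: "is_dse_system n C1 C2 Phi1 Phi2 Psi M1 M2 phi1 phi2 psi"
  shows "(\<Sum>zs\<in>correct_decoding_set n phi1 phi2 psi.
           \<Prod>z\<leftarrow>zs. pmf q (snd z)) \<le> card C1"
proof -
  let ?E1 = "Phi1 (replicate n undefined)" and ?E2 = "Phi2 (replicate n undefined)"
  have inj: "inj_on (\<lambda>zs. (?E1 (map fst zs), ?E2 (map snd zs))) (correct_decoding_set n phi1 phi2 psi)"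
    using sys by (rule inj_on_encrypt_correct_decoding_set) simp_all
  have E1: "?E1 x \<in> C1" if "length x = n" for x
    using sys that by (simp add: is_dse_system_def)
  have "(\<Sum>zs\<in>correct_decoding_set n phi1 phi2 psi. \<Prod>y\<leftarrow>map snd zs. pmf q y) \<le> card C1"
  proof (rule sum_comp_le_card_of_inj_on_pair[where e = "\<lambda>zs. ?E1 (map fst zs)" and f = "map snd"
        and w = "\<lambda>ys. \<Prod>y\<leftarrow>ys. pmf q y" and T = "{ys. length ys = n}"])
    show "inj_on (\<lambda>zs. (?E1 (map fst zs), map snd zs)) (correct_decoding_set n phi1 phi2 psi)"
      using inj by (auto simp: inj_on_def)
    show "(\<lambda>zs. ?E1 (map fst zs)) ` correct_decoding_set n phi1 phi2 psi \<subseteq> C1"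
      using E1 by (auto simp: correct_decoding_set_def)
    show "map snd ` correct_decoding_set n phi1 phi2 psi \<subseteq> {ys. length ys = n}"
      by (auto simp: correct_decoding_set_def)
    show "finite C1" using sys by (simp add: is_dse_system_def)
    show "finite {ys :: 'b list. length ys = n}" by (rule finite_lists_length)
    show "0 \<le> (\<Prod>x\<leftarrow>ys. pmf q x)" for ys by (rule prod_list_nonneg) auto
    show "(\<Sum>ys | length ys = n. \<Prod>x\<leftarrow>ys. pmf q x) \<le> 1" by (simp only: sum_prod_pmf_lists_length order_refl)
  qed (rule finite_correct_decoding_set)
  then show ?thesis by (simp add: o_def)
qed

lemma sum_prod_pmf_fst_correct_decoding_set_le_card:
  fixes phi1 :: "'a::finite list \<Rightarrow> nat" and phi2 :: "'b::finite list \<Rightarrow> nat" and q :: "'a pmf"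
  assumes sys: "is_dse_system n C1 C2 Phi1 Phi2 Psi M1 M2 phi1 phi2 psi"
  shows "(\<Sum>zs\<in>correct_decoding_set n phi1 phi2 psi.
           \<Prod>z\<leftarrow>zs. pmf q (fst z)) \<le> card C2"
proof -
  let ?E1 = "Phi1 (replicate n undefined)" and ?E2 = "Phi2 (replicate n undefined)"
  have inj: "inj_on (\<lambda>zs. (?E1 (map fst zs), ?E2 (map snd zs))) (correct_decoding_set n phi1 phi2 psi)"
    using sys by (rule inj_on_encrypt_correct_decoding_set) simp_all
  have E2: "?E2 y \<in> C2" if "length y = n" for y
    using sys that by (simp add: is_dse_system_def)
  have "(\<Sum>zs\<in>correct_decoding_set n phi1 phi2 psi. \<Prod>x\<leftarrow>map fst zs. pmf q x) \<le> card C2"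
  proof (rule sum_comp_le_card_of_inj_on_pair[where e = "\<lambda>zs. ?E2 (map snd zs)" and f = "map fst"
        and w = "\<lambda>xs. \<Prod>x\<leftarrow>xs. pmf q x" and T = "{xs. length xs = n}"])
    show "inj_on (\<lambda>zs. (?E2 (map snd zs), map fst zs)) (correct_decoding_set n phi1 phi2 psi)"
      using inj by (auto simp: inj_on_def)
    show "(\<lambda>zs. ?E2 (map snd zs)) ` correct_decoding_set n phi1 phi2 psi \<subseteq> C2"
      using E2 by (auto simp: correct_decoding_set_def)
    show "map fst ` correct_decoding_set n phi1 phi2 psi \<subseteq> {xs. length xs = n}"
      by (auto simp: correct_decoding_set_def)
    show "finite C2" using sys by (simp add: is_dse_system_def)
    show "finite {xs :: 'a list. length xs = n}" by (rule finite_lists_length)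
    show "0 \<le> (\<Prod>x\<leftarrow>xs. pmf q x)" for xs by (rule prod_list_nonneg) auto
    show "(\<Sum>xs | length xs = n. \<Prod>x\<leftarrow>xs. pmf q x) \<le> 1" by (simp only: sum_prod_pmf_lists_length order_refl)
  qed (rule finite_correct_decoding_set)
  then show ?thesis by (simp add: o_def)
qed

lemma card_correct_decoding_set_le:
  fixes phi1 :: "'a::finite list \<Rightarrow> nat" and phi2 :: "'b::finite list \<Rightarrow> nat"
  assumes sys: "is_dse_system n C1 C2 Phi1 Phi2 Psi M1 M2 phi1 phi2 psi"
  shows "card (correct_decoding_set n phi1 phi2 psi) \<le> card C1 * card C2"
proof -
  let ?E1 = "Phi1 (replicate n undefined)" and ?E2 = "Phi2 (replicate n undefined)"
  have inj: "inj_on (\<lambda>zs. (?E1 (map fst zs), ?E2 (map snd zs))) (correct_decoding_set n phi1 phi2 psi)"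
    using sys by (rule inj_on_encrypt_correct_decoding_set) simp_all
  moreover have "?E1 x \<in> C1" if "length x = n" for x
    using sys that by (simp add: is_dse_system_def)
  moreover have "?E2 y \<in> C2" if "length y = n" for y
    using sys that by (simp add: is_dse_system_def)
  moreover have "finite (C1 \<times> C2)"
    using sys by (simp add: is_dse_system_def)
  ultimately have "card (correct_decoding_set n phi1 phi2 psi) \<le> card (C1 \<times> C2)"
    by (intro card_inj_on_le) (auto simp: correct_decoding_set_def)
  then show ?thesis by (simp add: card_cartesian_product)
qed

lemma sw_region_of_dse_systems:
  fixes pX :: "('a::finite \<times> 'b::finite) pmf"
  assumes sys: "\<And>n. is_dse_system n (C1 n) (C2 n) (Phi1 n) (Phi2 n) (Psi n) (M1 n) (M2 n)
      (phi1 n) (phi2 n) (psi n)"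
    and rate1: "\<And>\<gamma>. 0 < \<gamma> \<Longrightarrow> eventually (\<lambda>n. log 2 (real (card (C1 n))) / real n \<le> R1 + \<gamma>) sequentially"
    and rate2: "\<And>\<gamma>. 0 < \<gamma> \<Longrightarrow> eventually (\<lambda>n. log 2 (real (card (C2 n))) / real n \<le> R2 + \<gamma>) sequentially"
    and reliable: "eventually (\<lambda>n. error_prob n pX (phi1 n) (phi2 n) (psi n) \<le> eps) sequentially"
    and "eps < 1"
  shows "(R1, R2) \<in> sw_region pX"
proof -
  define D where "D n = correct_decoding_set n (phi1 n) (phi2 n) (psi n)" for n
  have D_len: "D n \<subseteq> {zs. length zs = n}" for n
    by (auto simp: D_def correct_decoding_set_def)
  have prob_D: "eventually (\<lambda>n. 1 - eps \<le> measure_pmf.prob (replicate_pmf n pX) (D n)) sequentially"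
    using reliable by eventually_elim (simp add: D_def prob_correct_decoding_set)
  have card1: "eventually (\<lambda>n. real (card (C1 n)) \<le> 2 powr (real n * (R1 + \<gamma>))) sequentially"
    if "0 < \<gamma>" for \<gamma>
    using rate1[OF that] eventually_gt_at_top[of 0]
    by eventually_elim (rule card_le_powr_of_log_div_le)
  have card2: "eventually (\<lambda>n. real (card (C2 n)) \<le> 2 powr (real n * (R2 + \<gamma>))) sequentially"
    if "0 < \<gamma>" for \<gamma>
    using rate2[OF that] eventually_gt_at_top[of 0]
    by eventually_elim (rule card_le_powr_of_log_div_le)
  have "- rel_entropy2 pX (\<lambda>z. pmf (map_pmf snd pX) (snd z)) \<le> R1"
  proof (rule neg_rel_entropy2_le_rate[OF _ _ D_len \<open>eps < 1\<close> prob_D])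
    fix \<gamma> :: real assume "0 < \<gamma>"
    show "eventually (\<lambda>n. (\<Sum>zs\<in>D n. \<Prod>z\<leftarrow>zs. pmf (map_pmf snd pX) (snd z))
        \<le> 2 powr (real n * (R1 + \<gamma>))) sequentially"
      using card1[OF \<open>0 < \<gamma>\<close>]
      unfolding D_def
      by eventually_elim (rule order_trans[OF sum_prod_pmf_snd_correct_decoding_set_le_card[OF sys]])
  qed (simp_all add: pmf_positive)
  moreover have "- rel_entropy2 pX (\<lambda>z. pmf (map_pmf fst pX) (fst z)) \<le> R2"
  proof (rule neg_rel_entropy2_le_rate[OF _ _ D_len \<open>eps < 1\<close> prob_D])
    fix \<gamma> :: real assume "0 < \<gamma>"
    show "eventually (\<lambda>n. (\<Sum>zs\<in>D n. \<Prod>z\<leftarrow>zs. pmf (map_pmf fst pX) (fst z))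
        \<le> 2 powr (real n * (R2 + \<gamma>))) sequentially"
      using card2[OF \<open>0 < \<gamma>\<close>]
      unfolding D_def
      by eventually_elim (rule order_trans[OF sum_prod_pmf_fst_correct_decoding_set_le_card[OF sys]])
  qed (simp_all add: pmf_positive)
  moreover have "- rel_entropy2 pX (\<lambda>_. 1) \<le> R1 + R2"
  proof (rule neg_rel_entropy2_le_rate[OF _ _ D_len \<open>eps < 1\<close> prob_D])
    fix \<gamma> :: real assume "0 < \<gamma>"
    then have "eventually (\<lambda>n. real (card (C1 n)) \<le> 2 powr (real n * (R1 + \<gamma> / 2))
        \<and> real (card (C2 n)) \<le> 2 powr (real n * (R2 + \<gamma> / 2))) sequentially"
      by (intro eventually_conj card1 card2) simp_all
    then show "eventually (\<lambda>n. (\<Sum>zs\<in>D n. \<Prod>z\<leftarrow>zs. 1) \<le> 2 powr (real n * (R1 + R2 + \<gamma>))) sequentially"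
    proof eventually_elim
      case (elim n)
      have "(\<Sum>zs\<in>D n. \<Prod>z\<leftarrow>zs. 1) = real (card (D n))"
        by (simp add: map_replicate_const)
      also have "\<dots> \<le> real (card (C1 n)) * real (card (C2 n))"
        using card_correct_decoding_set_le[OF sys] by (simp add: D_def flip: of_nat_mult)
      also have "\<dots> \<le> 2 powr (real n * (R1 + \<gamma> / 2)) * 2 powr (real n * (R2 + \<gamma> / 2))"
        using elim by (intro mult_mono) auto
      also have "\<dots> = 2 powr (real n * (R1 + R2 + \<gamma>))"
        by (simp add: powr_add[symmetric] algebra_simps)
      finally show ?case .
    qed
  qed simp_all
  ultimately show ?thesis
    by (simp add: sw_region_def rel_entropy2_marginal rel_entropy2_const_one)
qed

theorem theorem2:
  fixes pX pK :: "('a::{finite,field} \<times> 'b::{finite,field}) pmf"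
    and eps delta delta0 :: real
  assumes "delta0 > 0"
    and "0 < eps" and "eps < 1"
    and "0 < delta" and "delta \<le> delta0"
  shows "reliable_secure_region eps delta pX pK \<subseteq> sw_region pX"
proof
  fix R assume "R \<in> reliable_secure_region eps delta pX pK"
  then obtain R1 R2 C1 C2 Phi1 Phi2 Psi M1 M2 phi1 phi2 psi
    where R: "R = (R1, R2)"
      and sys: "\<And>n. is_dse_system n (C1 n) (C2 n) (Phi1 n) (Phi2 n) (Psi n) (M1 n) (M2 n)
        (phi1 n) (phi2 n) (psi n)"
      and good: "\<And>\<gamma>. 0 < \<gamma> \<Longrightarrow> eventually (\<lambda>n.
          log 2 (real (card (C1 n))) / real n \<le> R1 + \<gamma> \<and>
          log 2 (real (card (C2 n))) / real n \<le> R2 + \<gamma> \<and>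
          error_prob n pX (phi1 n) (phi2 n) (psi n) \<le> eps \<and>
          mutual_info2 (cipher_source_joint n pX pK (Phi1 n) (Phi2 n)) \<le> delta) sequentially"
    unfolding reliable_secure_region_def eventually_sequentially by blast
  have "(R1, R2) \<in> sw_region pX"
  proof (rule sw_region_of_dse_systems[OF sys _ _ _ \<open>eps < 1\<close>])
    show "eventually (\<lambda>n. log 2 (real (card (C1 n))) / real n \<le> R1 + \<gamma>) sequentially"
      and "eventually (\<lambda>n. log 2 (real (card (C2 n))) / real n \<le> R2 + \<gamma>) sequentially"
      if "0 < \<gamma>" for \<gamma>
      using good[OF that] by (auto elim: eventually_mono)
    show "eventually (\<lambda>n. error_prob n pX (phi1 n) (phi2 n) (psi n) \<le> eps) sequentially"
      using good[of 1] by (auto elim: eventually_mono)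
  qed
  then show "R \<in> sw_region pX" by (simp add: R)
qed

end
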